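(* Let $k\ge 1$ and $l\ge 1$ be integers and let $l_1=l_2=\cdots=l_k=l$. Then the generalized theta graph $\Theta_{l_1,l_2,\dots,l_k}$ is cyclically orderable.
   Context: The generalized theta graph $\Theta_{l_1,\dots,l_k}$ (with $l_1\le\cdots\le l_k$) is the graph obtained by joining two distinct vertices by $k$ internally vertex-disjoint paths of lengths $l_1,l_2,\dots,l_k$ (if several paths have length $1$ this yields parallel edges). A cyclic base ordering (CBO) of a connected graph $G$ is a bijection $\mathcal{O}:E(G)\to\{1,\dots,|E(G)|\}$ such that for every $i\in\{1,\dots,|E(G)|\}$ the edges $\mathcal{O}^{-1}(i),\dots,\mathcal{O}^{-1}(i+|V(G)|-2)$ (indices taken cyclically modulo $|E(G)|$) induce a spanning tree of $G$; $G$ is cyclically orderable if it has a CBO. *)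

theory Defs
  imports Main
begin

text \<open>Multigraphs (parallel edges allowed, no loops): a vertex set V, an edge set E,
  and an endpoint map ends :: 'e => 'v set with ends e = {u, v}.\<close>

definition adj_rel :: "'e set \<Rightarrow> ('e \<Rightarrow> 'v set) \<Rightarrow> ('v \<times> 'v) set" where
  "adj_rel F ends = {(x, y). \<exists>e\<in>F. ends e = {x, y}}"

definition reachable :: "'e set \<Rightarrow> ('e \<Rightarrow> 'v set) \<Rightarrow> 'v \<Rightarrow> 'v \<Rightarrow> bool" where
  "reachable F ends u v \<longleftrightarrow> (u, v) \<in> (adj_rel F ends)\<^sup>*"

definition acyclic_edges :: "'e set \<Rightarrow> ('e \<Rightarrow> 'v set) \<Rightarrow> bool" where
  "acyclic_edges F ends \<longleftrightarrow>
     (\<forall>e\<in>F. \<forall>u v. ends e = {u, v} \<longrightarrow> \<not> reachable (F - {e}) ends u v)"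

definition spanning_tree :: "'v set \<Rightarrow> 'e set \<Rightarrow> ('e \<Rightarrow> 'v set) \<Rightarrow> 'e set \<Rightarrow> bool" where
  "spanning_tree V E ends F \<longleftrightarrow>
     F \<subseteq> E \<and> (\<forall>u\<in>V. \<forall>v\<in>V. reachable F ends u v) \<and> acyclic_edges F ends"

definition cbo :: "'v set \<Rightarrow> 'e set \<Rightarrow> ('e \<Rightarrow> 'v set) \<Rightarrow> ('e \<Rightarrow> nat) \<Rightarrow> bool" where
  "cbo V E ends ord \<longleftrightarrow>
     bij_betw ord E {1..card E} \<and>
     (\<forall>i\<in>{1..card E}.
        spanning_tree V E ends
          {e\<in>E. \<exists>t < card V - 1. ord e = (i + t - 1) mod card E + 1})"

definition cyclically_orderable :: "'v set \<Rightarrow> 'e set \<Rightarrow> ('e \<Rightarrow> 'v set) \<Rightarrow> bool" where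
  "cyclically_orderable V E ends \<longleftrightarrow> (\<exists>ord. cbo V E ends ord)"

text \<open>Poles are Inl False and Inl True; internal vertex j (0<j<l) of path i is Inr (i,j).
  Edge (i,j), i<k, j<l, is the j-th edge of path i, joining its vertices j and j+1.\<close>
definition theta_vtx :: "nat \<Rightarrow> nat \<Rightarrow> nat \<Rightarrow> bool + nat \<times> nat" where
  "theta_vtx l i j = (if j = 0 then Inl False else if j = l then Inl True else Inr (i, j))"

definition theta_V :: "nat \<Rightarrow> nat \<Rightarrow> (bool + nat \<times> nat) set" where
  "theta_V k l = {Inl False, Inl True} \<union> {Inr (i, j) | i j. i < k \<and> 0 < j \<and> j < l}"

definition theta_E :: "nat \<Rightarrow> nat \<Rightarrow> (nat \<times> nat) set" where
  "theta_E k l = {(i, j). i < k \<and> j < l}"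

definition theta_ends :: "nat \<Rightarrow> nat \<times> nat \<Rightarrow> (bool + nat \<times> nat) set" where
  "theta_ends l e = {theta_vtx l (fst e) (snd e), theta_vtx l (fst e) (snd e + 1)}"

end

theory Submission
  imports Defs
begin

(* Order the edges level by level: the first edges of all k paths, then their second edges,
  and so on.  A cyclic window of |V| - 1 = kl - k + 1 consecutive edges misses exactly k - 1
  cyclically consecutive edges, and these lie on k - 1 distinct paths.  So every window keeps
  one path whole, joining the two poles, and removes exactly one edge from each other path,
  splitting it into two pendant paths hanging from the poles: a spanning tree. *)

lemma adj_rel_sym: "(x, y) \<in> adj_rel F ends \<Longrightarrow> (y, x) \<in> adj_rel F ends"
  unfolding adj_rel_def by (auto simp: insert_commute)

lemma reachable_refl: "reachable F ends u u"
  unfolding reachable_def by simp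

lemma reachable_sym: "reachable F ends u v \<Longrightarrow> reachable F ends v u"
  unfolding reachable_def
proof (induction rule: rtrancl_induct)
  case (step y z)
  then show ?case by (blast intro: converse_rtrancl_into_rtrancl adj_rel_sym)
qed simp

lemma reachable_trans:
  "reachable F ends u v \<Longrightarrow> reachable F ends v w \<Longrightarrow> reachable F ends u w"
  unfolding reachable_def by (rule rtrancl_trans)

lemma reachable_edge: "e \<in> F \<Longrightarrow> ends e = {x, y} \<Longrightarrow> reachable F ends x y"
  unfolding reachable_def adj_rel_def by auto

lemma reachable_label_eq:
  assumes "\<forall>e\<in>F. \<forall>x y. ends e = {x, y} \<longrightarrow> L x = L y"
    and "reachable F ends u v"
  shows "L u = L v"
  using assms(2) unfolding reachable_def
proof (induction rule: rtrancl_induct)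
  case (step y z)
  then show ?case using assms(1) unfolding adj_rel_def by auto
qed simp

definition separates_edge :: "('v \<Rightarrow> bool) \<Rightarrow> 'e set \<Rightarrow> ('e \<Rightarrow> 'v set) \<Rightarrow> 'e \<Rightarrow> bool" where
  "separates_edge L F ends e \<longleftrightarrow>
     (\<forall>x y. ends e = {x, y} \<longrightarrow> L x \<noteq> L y) \<and>
     (\<forall>e'\<in>F - {e}. \<forall>x y. ends e' = {x, y} \<longrightarrow> L x = L y)"

lemma acyclic_edgesI:
  assumes "\<And>e. e \<in> F \<Longrightarrow> \<exists>L :: 'v \<Rightarrow> bool. separates_edge L F ends e"
  shows "acyclic_edges F ends"
  unfolding acyclic_edges_def
proof (intro ballI allI impI notI)
  fix e u v
  assume "e \<in> F" and uv: "ends e = {u, v}" and reach: "reachable (F - {e}) ends u v"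
  from assms[OF \<open>e \<in> F\<close>] obtain L :: "'v \<Rightarrow> bool" where "separates_edge L F ends e" ..
  then have "L u \<noteq> L v" and const: "\<forall>e'\<in>F - {e}. \<forall>x y. ends e' = {x, y} \<longrightarrow> L x = L y"
    using uv unfolding separates_edge_def by simp_all
  with reachable_label_eq[OF const reach] show False by simp
qed

type_synonym theta_vertex = "bool + nat \<times> nat"

lemma theta_separates_edgeI:
  assumes "L (theta_vtx l a b) \<noteq> L (theta_vtx l a (Suc b))"
    and "\<forall>(a', j)\<in>F - {(a, b)}. L (theta_vtx l a' j) = L (theta_vtx l a' (Suc j))"
  shows "separates_edge L F (theta_ends l) (a, b)"
  unfolding separates_edge_def
proof (intro conjI allI impI ballI)
  fix x y
  assume "theta_ends l (a, b) = {x, y}"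
  then show "L x \<noteq> L y" using assms(1) by (auto simp: theta_ends_def doubleton_eq_iff)
next
  fix e' x y
  assume "e' \<in> F - {(a, b)}" and "theta_ends l e' = {x, y}"
  then show "L x = L y" using assms(2) by (cases e') (auto simp: theta_ends_def doubleton_eq_iff)
qed

lemma theta_reachable_along_path:
  assumes "p \<le> q" and "\<forall>j. p \<le> j \<and> j < q \<longrightarrow> (a, j) \<in> F"
  shows "reachable F (theta_ends l) (theta_vtx l a p) (theta_vtx l a q)"
  using assms
proof (induction q rule: dec_induct)
  case (step q)
  have "reachable F (theta_ends l) (theta_vtx l a q) (theta_vtx l a (Suc q))"
    using step by (intro reachable_edge[of "(a, q)"]) (auto simp: theta_ends_def)
  with step show ?case by (auto intro: reachable_trans)
qed (rule reachable_refl)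

definition theta_tree :: "nat \<Rightarrow> nat \<Rightarrow> nat \<Rightarrow> (nat \<Rightarrow> nat) \<Rightarrow> (nat \<times> nat) set" where
  "theta_tree k l c g = {(a, b) \<in> theta_E k l. a = c \<or> b \<noteq> g a}"

lemma theta_tree_connected:
  assumes "l \<ge> 1" and "c < k" and "u \<in> theta_V k l" and "v \<in> theta_V k l"
  shows "reachable (theta_tree k l c g) (theta_ends l) u v"
proof -
  let ?F = "theta_tree k l c g"
  have reach: "reachable ?F (theta_ends l) (theta_vtx l a p) (theta_vtx l a q)"
    if "a < k" "p \<le> q" "q \<le> l" "a = c \<or> \<not> (p \<le> g a \<and> g a < q)" for a p q
    using that by (intro theta_reachable_along_path) (auto simp: theta_tree_def theta_E_def)
  have vtx: "theta_vtx l a 0 = Inl False" "theta_vtx l a l = Inl True"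
    "0 < j \<Longrightarrow> j < l \<Longrightarrow> theta_vtx l a j = Inr (a, j)" for a j
    using assms(1) by (auto simp: theta_vtx_def)
  have poles: "reachable ?F (theta_ends l) (Inl False) (Inl True)"
    using reach[of c 0 l] assms by (simp add: vtx)
  have from_pole: "reachable ?F (theta_ends l) (Inl False) w" if w: "w \<in> theta_V k l" for w
  proof -
    consider "w = Inl False" | "w = Inl True" | a j where "w = Inr (a, j)" "a < k" "0 < j" "j < l"
      using w unfolding theta_V_def by auto
    then show ?thesis
    proof cases
      case 3
      show ?thesis
      proof (cases "j \<le> g a")
        case True
        then show ?thesis using reach[of a 0 j] 3 by (simp add: vtx)
      next
        case False
        then have "reachable ?F (theta_ends l) (Inr (a, j)) (Inl True)"
          using reach[of a j l] 3 by (simp add: vtx)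
        then show ?thesis using 3 poles by (auto intro: reachable_trans reachable_sym)
      qed
    qed (use poles reachable_refl in auto)
  qed
  show ?thesis using from_pole[OF assms(3)] from_pole[OF assms(4)]
    by (auto intro: reachable_trans reachable_sym)
qed

lemma theta_tree_cut_at_poles:
  assumes "c < k" and "b < l" and "\<forall>a<k. g a < l"
  shows "\<exists>L :: theta_vertex \<Rightarrow> bool. separates_edge L (theta_tree k l c g) (theta_ends l) (c, b)"
proof -
  define h where "h = g(c := b)"
  define L :: "theta_vertex \<Rightarrow> bool"
    where "L v = (case v of Inl pole \<Rightarrow> \<not> pole | Inr (a, p) \<Rightarrow> p \<le> h a)" for v
  have L_vtx: "L (theta_vtx l a p) \<longleftrightarrow> p \<le> h a" if "a < k" "p \<le> l" for a p
    using assms that by (auto simp: L_def h_def theta_vtx_def)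
  have "\<forall>(a, j)\<in>theta_tree k l c g - {(c, b)}. L (theta_vtx l a j) = L (theta_vtx l a (Suc j))"
    by (auto simp: L_vtx theta_tree_def theta_E_def h_def)
  moreover have "L (theta_vtx l c b) \<noteq> L (theta_vtx l c (Suc b))"
    using assms by (simp add: L_vtx h_def)
  ultimately show ?thesis by (blast intro: theta_separates_edgeI)
qed

lemma theta_tree_cut_segment:
  assumes "a \<noteq> c" and "b < l" and "g a < l" and "b \<noteq> g a"
  shows "\<exists>L :: theta_vertex \<Rightarrow> bool. separates_edge L (theta_tree k l c g) (theta_ends l) (a, b)"
proof -
  define lo where "lo = min b (g a)"
  define hi where "hi = max b (g a)"
  define L :: "theta_vertex \<Rightarrow> bool"
    where "L v = (case v of Inl _ \<Rightarrow> False | Inr (a', p) \<Rightarrow> a' = a \<and> lo < p \<and> p \<le> hi)" for v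
  have L_vtx: "L (theta_vtx l a' p) \<longleftrightarrow> a' = a \<and> lo < p \<and> p \<le> hi" if "p \<le> l" for a' p
    using assms that by (auto simp: L_def lo_def hi_def theta_vtx_def)
  have "\<forall>(a', j)\<in>theta_tree k l c g - {(a, b)}. L (theta_vtx l a' j) = L (theta_vtx l a' (Suc j))"
    using assms by (auto simp: L_vtx theta_tree_def theta_E_def lo_def hi_def)
  moreover have "L (theta_vtx l a b) \<noteq> L (theta_vtx l a (Suc b))"
    using assms by (auto simp: L_vtx lo_def hi_def)
  ultimately show ?thesis by (blast intro: theta_separates_edgeI)
qed

lemma theta_tree_acyclic:
  assumes "c < k" and "\<forall>a<k. g a < l"
  shows "acyclic_edges (theta_tree k l c g) (theta_ends l)"
proof (rule acyclic_edgesI)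
  fix e
  assume "e \<in> theta_tree k l c g"
  then obtain a b where e: "e = (a, b)" and "a < k" "b < l" "a = c \<or> b \<noteq> g a"
    by (auto simp: theta_tree_def theta_E_def)
  then show "\<exists>L. separates_edge L (theta_tree k l c g) (theta_ends l) e"
    using theta_tree_cut_at_poles[OF assms(1) \<open>b < l\<close> assms(2)]
      theta_tree_cut_segment[of a c b l g k] assms(2) by (cases "a = c") auto
qed

lemma theta_tree_spanning_tree:
  assumes "l \<ge> 1" and "c < k" and "\<forall>a<k. g a < l"
  shows "spanning_tree (theta_V k l) (theta_E k l) (theta_ends l) (theta_tree k l c g)"
proof -
  have "theta_tree k l c g \<subseteq> theta_E k l" by (auto simp: theta_tree_def)
  then show ?thesis
    unfolding spanning_tree_def
    using theta_tree_connected[OF assms(1,2)] theta_tree_acyclic[OF assms(2,3)] by blast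
qed

lemma cyclic_window_iff:
  fixes p q M N :: nat
  assumes "p < N" and "0 < M" and "M \<le> N"
  shows "(\<exists>t<M. p = (q + t) mod N) \<longleftrightarrow> (int q - int p) mod int N \<notin> {1..int (N - M)}"
proof -
  define d where "d = (int p - int q) mod int N"
  have d: "0 \<le> d" "d < int N" using assms by (simp_all add: d_def)
  have "(\<exists>t<M. p = (q + t) mod N) \<longleftrightarrow> d < int M"
  proof
    assume "\<exists>t<M. p = (q + t) mod N"
    then obtain t where "t < M" and "int p = (int q + int t) mod int N"
      by (auto simp: of_nat_mod)
    then have "d = int t" using assms by (simp add: d_def mod_diff_left_eq)
    with \<open>t < M\<close> show "d < int M" by simp
  next
    assume "d < int M"
    have "int ((q + nat d) mod N) = (int q + (int p - int q) mod int N) mod int N"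
      using d by (simp add: of_nat_mod d_def)
    also have "\<dots> = int p" using assms by (simp add: mod_add_right_eq)
    finally show "\<exists>t<M. p = (q + t) mod N"
      using \<open>d < int M\<close> d by (intro exI[of _ "nat d"]) auto
  qed
  moreover have "(int q - int p) mod int N = (if d = 0 then 0 else int N - d)"
    using zmod_zminus1_eq_if[of "int p - int q" "int N"] by (simp add: d_def)
  moreover have "int (N - M) = int N - int M" using assms by simp
  ultimately show ?thesis using assms d by (simp only: atLeastAtMost_iff) auto
qed

lemma level_index_in_gap_iff:
  fixes a b k l :: nat and q :: int
  assumes "a < k" and "b < l"
  shows "(q - int (b * k + a)) mod int (k * l) \<in> {1..int k - 1} \<longleftrightarrow>
    (q - int a) mod int k \<noteq> 0 \<and> int b = (q - int a) div int k mod int l"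
proof -
  define r where "r = (q - int a) mod int k"
  define u where "u = ((q - int a) div int k - int b) mod int l"
  have r: "0 \<le> r" "r < int k" and u: "0 \<le> u" "u < int l"
    using assms by (simp_all add: r_def u_def)
  have shift: "q - int (b * k + a) = (q - int a) + (- int b) * int k" by simp
  have "(q - int (b * k + a)) div int k = (q - int a) div int k - int b"
    using assms unfolding shift by (subst div_mult_self1) simp_all
  moreover have "(q - int (b * k + a)) mod int k = r"
    unfolding shift r_def by (subst mod_mult_self1) (rule refl)
  ultimately have "(q - int (b * k + a)) mod int (k * l) = int k * u + r"
    using mod_mult2_eq'[of "q - int (b * k + a)" k l] by (simp add: u_def)
  moreover have "int k * u + r \<in> {1..int k - 1} \<longleftrightarrow> u = 0 \<and> r \<noteq> 0"
  proof (cases "u = 0")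
    case False
    then have "int k \<le> int k * u" using u assms by simp
    then show ?thesis using False r by (simp only: atLeastAtMost_iff) arith
  qed (use r in auto)
  moreover have "u = 0 \<longleftrightarrow> int b = (q - int a) div int k mod int l"
  proof -
    have "int b mod int l = int b" using assms by simp
    then show ?thesis unfolding u_def mod_eq_0_iff_dvd by (metis mod_eq_dvd_iff)
  qed
  ultimately show ?thesis by (auto simp: r_def)
qed

lemma card_theta_E: "card (theta_E k l) = k * l"
proof -
  have "theta_E k l = {..<k} \<times> {..<l}" by (auto simp: theta_E_def)
  then show ?thesis by (simp add: card_cartesian_product)
qed

lemma card_theta_V: "card (theta_V k l) = 2 + k * (l - 1)"
proof -
  have V: "theta_V k l = {Inl False, Inl True} \<union> Inr ` ({..<k} \<times> {1..<l})"
    by (auto simp: theta_V_def)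
  have "card (Inr ` ({..<k} \<times> {1..<l}) :: (bool + nat \<times> nat) set) = k * (l - 1)"
    by (simp add: card_image card_cartesian_product)
  then show ?thesis unfolding V by (subst card_Un_disjoint) auto
qed

lemma level_index_less:
  fixes a b k l :: nat
  assumes "a < k" and "b < l"
  shows "b * k + a < k * l"
proof -
  have "Suc b * k \<le> l * k" using assms by (intro mult_le_mono1) simp
  then show ?thesis using assms by (simp add: mult.commute)
qed

definition theta_level_order :: "nat \<Rightarrow> nat \<times> nat \<Rightarrow> nat" where
  "theta_level_order k e = snd e * k + fst e + 1"

lemma bij_betw_theta_level_order:
  "bij_betw (theta_level_order k) (theta_E k l) {1..k * l}"
proof (rule bij_betw_byWitness[where f' = "\<lambda>n. ((n - 1) mod k, (n - 1) div k)"])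
  show "\<forall>e\<in>theta_E k l.
      ((theta_level_order k e - 1) mod k, (theta_level_order k e - 1) div k) = e"
    by (auto simp: theta_level_order_def theta_E_def)
  show "\<forall>n\<in>{1..k * l}. theta_level_order k ((n - 1) mod k, (n - 1) div k) = n"
    by (simp add: theta_level_order_def)
  show "theta_level_order k ` theta_E k l \<subseteq> {1..k * l}"
    using level_index_less by (force simp: theta_level_order_def theta_E_def)
  have "((n - 1) mod k, (n - 1) div k) \<in> theta_E k l" if "n \<in> {1..k * l}" for n
  proof -
    have "n - 1 < l * k" using that by (auto simp: mult.commute)
    moreover have "k \<noteq> 0" using that by (cases "k = 0") auto
    ultimately show ?thesis by (simp add: theta_E_def less_mult_imp_div_less)
  qed
  then show "(\<lambda>n. ((n - 1) mod k, (n - 1) div k)) ` {1..k * l} \<subseteq> theta_E k l"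
    by blast
qed

lemma theta_level_order_window:
  assumes "k \<ge> 1" and "l \<ge> 1" and "q < k * l"
  defines "g \<equiv> \<lambda>a. nat ((int q - int a) div int k mod int l)"
  shows "{e \<in> theta_E k l. \<exists>t < card (theta_V k l) - 1.
            theta_level_order k e = (q + t) mod card (theta_E k l) + 1}
       = theta_tree k l (q mod k) g"
proof -
  let ?N = "k * l" and ?M = "card (theta_V k l) - 1"
  have M: "0 < ?M" "?M \<le> ?N" "?N - ?M = k - 1"
    using assms by (auto simp: card_theta_V diff_mult_distrib2)
  have "(\<exists>t < ?M. theta_level_order k (a, b) = (q + t) mod ?N + 1) \<longleftrightarrow>
        a = q mod k \<or> b \<noteq> g a" if "a < k" "b < l" for a b
  proof -
    have "(\<exists>t < ?M. theta_level_order k (a, b) = (q + t) mod ?N + 1) \<longleftrightarrow>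
          (\<exists>t < ?M. b * k + a = (q + t) mod ?N)"
      by (simp add: theta_level_order_def)
    also have "\<dots> \<longleftrightarrow> (int q - int (b * k + a)) mod int ?N \<notin> {1..int k - 1}"
      using cyclic_window_iff[OF level_index_less[OF that] M(1,2)] M(3) assms by simp
    also have "\<dots> \<longleftrightarrow>
        \<not> ((int q - int a) mod int k \<noteq> 0 \<and> int b = (int q - int a) div int k mod int l)"
      using level_index_in_gap_iff[OF that] by simp
    also have "\<dots> \<longleftrightarrow> a = q mod k \<or> b \<noteq> g a"
    proof -
      have "(int q - int a) mod int k = 0 \<longleftrightarrow> int (q mod k) = int (a mod k)"
        by (simp add: of_nat_mod mod_eq_dvd_iff mod_eq_0_iff_dvd)
      moreover have "int b = (int q - int a) div int k mod int l \<longleftrightarrow> b = g a"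
        using assms(2) by (auto simp: g_def)
      ultimately show ?thesis using that by auto
    qed
    finally show ?thesis .
  qed
  then show ?thesis
    by (auto simp: card_theta_E theta_tree_def theta_E_def)
qed

theorem mainTheorem9:
  fixes k l :: nat
  assumes "k \<ge> 1" and "l \<ge> 1"
  shows "cyclically_orderable (theta_V k l) (theta_E k l) (theta_ends l)"
proof -
  have "spanning_tree (theta_V k l) (theta_E k l) (theta_ends l)
          {e \<in> theta_E k l. \<exists>t < card (theta_V k l) - 1.
             theta_level_order k e = (i + t - 1) mod card (theta_E k l) + 1}"
    if "i \<in> {1..card (theta_E k l)}" for i
  proof -
    define q where "q = i - 1"
    have "q < k * l" and "i + t - 1 = q + t" for t
      using that by (auto simp: q_def card_theta_E)
    moreover have "nat ((int q - int a) div int k mod int l) < l" for a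
      using assms(2) by (simp add: nat_less_iff)
    ultimately show ?thesis
      using theta_level_order_window[OF assms \<open>q < k * l\<close>]
        theta_tree_spanning_tree[OF assms(2)] assms(1) by simp
  qed
  then have "cbo (theta_V k l) (theta_E k l) (theta_ends l) (theta_level_order k)"
    unfolding cbo_def using bij_betw_theta_level_order card_theta_E by simp
  then show ?thesis unfolding cyclically_orderable_def by blast
qed

end
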